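(* Let $f\colon M\to\mathbb H$ be a minimal conformal immersion on a simply connected Riemann surface with right normal $R$ and conjugate $f^*$. Let $\mu\in\mathbb C\setminus\{0,1\}$, $m\in\mathbb H_*$, $\hat a=m\frac{\mu+\mu^{-1}}2m^{-1}$, $\hat b=mi\frac{\mu^{-1}-\mu}2m^{-1}$, $\rho=m\frac{i(1+\mu)}{1-\mu}m^{-1}$, and consider the minimal surface $h=f\hat b+f^*(\hat a-1)$ in the right associated family of $f$, with conjugate $h^*=f^*\hat b-f(\hat a-1)$ and right normal $R_h=(\rho+R)R(\rho+R)^{-1}$. Then $$(fR-f^* )(R+\rho)^{-1}=-\tfrac12\big(hR_h-h^*\big).$$ Consequently every non-constant $\mu$-Darboux transform $f^\sharp=(fR-f^* )(R+\rho)^{-1}$ of $f$ is the associated Willmore surface $gR_g-g^*$ of the minimal surface $g=-\tfrac12 h$ in the right associated family of $f$.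
   Context: Quaternions $\mathbb H$, $\mathbb H_*=\mathbb H\setminus\{0\}$, $\mathbb C=\operatorname{span}_{\mathbb R}\{1,i\}$. $*\omega(X)=\omega(JX)$; right normal defined by $*df=-df\,R$; conjugate surface $df^*=-*df$. The right associated family of $f$ consists of the minimal surfaces $fp+f^*q$, $p,q\in\mathbb H$. For a minimal surface $g$ with right normal $R_g$ and conjugate $g^*$, the associated Willmore surface is $g^\flat=gR_g-g^*$. The non-constant $\mu$-Darboux transforms of $f$ (line bundles spanned by parallel sections of the associated family of flat connections of the conformal Gauss map of $f$ at $\lambda=\mu$, not of the form $(n,0)^t$) are exactly the maps $(fR-f^* )(R+\rho)^{-1}$ with $m\in\mathbb H_*$ and $f^*$ a conjugate surface. *)

theory Defs
  imports "HOL-Analysis.Analysis"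
begin

datatype quat = Quat (qRe: real) (qI: real) (qJ: real) (qK: real)

lemma quat_eq_iff: "x = y \<longleftrightarrow> qRe x = qRe y \<and> qI x = qI y \<and> qJ x = qJ y \<and> qK x = qK y"
  by (cases x; cases y) auto

lemma quat_eqI: "qRe x = qRe y \<Longrightarrow> qI x = qI y \<Longrightarrow> qJ x = qJ y \<Longrightarrow> qK x = qK y \<Longrightarrow> x = y"
  by (simp add: quat_eq_iff)

instantiation quat :: ab_group_add
begin
definition "0 = Quat 0 0 0 0"
definition "x + y = Quat (qRe x + qRe y) (qI x + qI y) (qJ x + qJ y) (qK x + qK y)"
definition "- x = Quat (- qRe x) (- qI x) (- qJ x) (- qK x)"
definition "x - y = Quat (qRe x - qRe y) (qI x - qI y) (qJ x - qJ y) (qK x - qK y)"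
instance by standard (simp_all add: quat_eq_iff zero_quat_def plus_quat_def uminus_quat_def minus_quat_def)
end

lemma quat_add_simps [simp]:
  "qRe 0 = 0" "qI 0 = 0" "qJ 0 = 0" "qK 0 = 0"
  "qRe (x + y) = qRe x + qRe y" "qI (x + y) = qI x + qI y" "qJ (x + y) = qJ x + qJ y" "qK (x + y) = qK x + qK y"
  "qRe (- x) = - qRe x" "qI (- x) = - qI x" "qJ (- x) = - qJ x" "qK (- x) = - qK x"
  "qRe (x - y) = qRe x - qRe y" "qI (x - y) = qI x - qI y" "qJ (x - y) = qJ x - qJ y" "qK (x - y) = qK x - qK y"
  by (simp_all add: zero_quat_def plus_quat_def uminus_quat_def minus_quat_def)

instantiation quat :: "{real_vector, ring_1}"
begin
definition "scaleR r x = Quat (r * qRe x) (r * qI x) (r * qJ x) (r * qK x)"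
definition "1 = Quat 1 0 0 0"
definition "x * y = Quat
   (qRe x * qRe y - qI x * qI y - qJ x * qJ y - qK x * qK y)
   (qRe x * qI y + qI x * qRe y + qJ x * qK y - qK x * qJ y)
   (qRe x * qJ y - qI x * qK y + qJ x * qRe y + qK x * qI y)
   (qRe x * qK y + qI x * qJ y - qJ x * qI y + qK x * qRe y)"
instance by standard
  (simp_all add: quat_eq_iff scaleR_quat_def one_quat_def times_quat_def algebra_simps)
end

lemma quat_mult_simps [simp]:
  "qRe (r *\<^sub>R x) = r * qRe x" "qI (r *\<^sub>R x) = r * qI x" "qJ (r *\<^sub>R x) = r * qJ x" "qK (r *\<^sub>R x) = r * qK x"
  "qRe 1 = 1" "qI 1 = 0" "qJ 1 = 0" "qK 1 = 0"
  "qRe (x * y) = qRe x * qRe y - qI x * qI y - qJ x * qJ y - qK x * qK y"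
  "qI (x * y) = qRe x * qI y + qI x * qRe y + qJ x * qK y - qK x * qJ y"
  "qJ (x * y) = qRe x * qJ y - qI x * qK y + qJ x * qRe y + qK x * qI y"
  "qK (x * y) = qRe x * qK y + qI x * qJ y - qJ x * qI y + qK x * qRe y"
  by (simp_all add: scaleR_quat_def one_quat_def times_quat_def)

definition quat_sqnorm :: "quat \<Rightarrow> real" where
  "quat_sqnorm x = (qRe x)\<^sup>2 + (qI x)\<^sup>2 + (qJ x)\<^sup>2 + (qK x)\<^sup>2"

lemma quat_sqnorm_eq_0: "quat_sqnorm x = 0 \<longleftrightarrow> x = 0"
  by (simp add: quat_sqnorm_def quat_eq_iff sum_power2_eq_zero_iff add_nonneg_eq_0_iff)

lemma quat_sqnorm_L2: "quat_sqnorm x = (L2_set (\<lambda>n::nat. [qRe x, qI x, qJ x, qK x] ! n) {0..<4})\<^sup>2"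
proof -
  have "{0..<4::nat} = {0,1,2,3}" by auto
  then show ?thesis by (simp add: L2_set_def quat_sqnorm_def sum_nonneg)
qed

instantiation quat :: division_ring
begin
definition "inverse x = Quat (qRe x / quat_sqnorm x) (- qI x / quat_sqnorm x)
                            (- qJ x / quat_sqnorm x) (- qK x / quat_sqnorm x)"
definition "x div (y::quat) = x * inverse y"
instance
proof
  fix x y :: quat
  show "x \<noteq> 0 \<Longrightarrow> inverse x * x = 1"
  proof -
    assume "x \<noteq> 0"
    then have s: "quat_sqnorm x \<noteq> 0" by (simp add: quat_sqnorm_eq_0)
    have e: "(qRe x * qRe x + qI x * qI x + qJ x * qJ x + qK x * qK x) / quat_sqnorm x = 1"
      using s by (simp add: quat_sqnorm_def power2_eq_square)
    show ?thesis using e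
      by (simp add: quat_eq_iff inverse_quat_def times_quat_def one_quat_def
          add_divide_distrib diff_divide_distrib algebra_simps)
  qed
  show "x \<noteq> 0 \<Longrightarrow> x * inverse x = 1"
  proof -
    assume "x \<noteq> 0"
    then have s: "quat_sqnorm x \<noteq> 0" by (simp add: quat_sqnorm_eq_0)
    have e: "(qRe x * qRe x + qI x * qI x + qJ x * qJ x + qK x * qK x) / quat_sqnorm x = 1"
      using s by (simp add: quat_sqnorm_def power2_eq_square)
    show ?thesis using e
      by (simp add: quat_eq_iff inverse_quat_def times_quat_def one_quat_def
          add_divide_distrib diff_divide_distrib algebra_simps)
  qed
  show "x div y = x * inverse y" by (simp add: divide_quat_def)
  show "inverse (0::quat) = 0" by (simp add: inverse_quat_def zero_quat_def)
qed
end

lemma quat_sqnorm_mult: "quat_sqnorm (x * y) = quat_sqnorm x * quat_sqnorm y"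
  by (simp add: quat_sqnorm_def power2_eq_square algebra_simps)

instantiation quat :: real_normed_div_algebra
begin
definition "norm x = sqrt (quat_sqnorm x)"
definition "sgn x = x /\<^sub>R norm x" for x :: quat
definition "dist x y = norm (x - y)" for x y :: quat
definition "(uniformity :: (quat \<times> quat) filter) = (INF e\<in>{0 <..}. principal {(x, y). dist x y < e})"
definition "open (U :: quat set) \<longleftrightarrow> (\<forall>x\<in>U. eventually (\<lambda>(x', y). x' = x \<longrightarrow> y \<in> U) uniformity)"
instance
proof
  fix r :: real and x y :: quat
  show "(norm x = 0) = (x = 0)" by (simp add: norm_quat_def quat_sqnorm_eq_0)
  have L: "norm z = L2_set (\<lambda>n::nat. [qRe z, qI z, qJ z, qK z] ! n) {0..<4}" for z :: quat
    unfolding norm_quat_def quat_sqnorm_L2 by (simp add: L2_set_nonneg)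
  have "L2_set (\<lambda>n::nat. [qRe (x+y), qI (x+y), qJ (x+y), qK (x+y)] ! n) {0..<4}
     = L2_set (\<lambda>n::nat. [qRe x, qI x, qJ x, qK x] ! n + [qRe y, qI y, qJ y, qK y] ! n) {0..<4}"
  proof (rule L2_set_cong)
    fix n :: nat assume "n \<in> {0..<4}"
    then have "n = 0 \<or> n = 1 \<or> n = 2 \<or> n = 3" by auto
    then show "[qRe (x+y), qI (x+y), qJ (x+y), qK (x+y)] ! n
       = [qRe x, qI x, qJ x, qK x] ! n + [qRe y, qI y, qJ y, qK y] ! n" by auto
  qed simp
  then show "norm (x + y) \<le> norm x + norm y"
    unfolding L by (metis L2_set_triangle_ineq)
  show "norm (r *\<^sub>R x) = \<bar>r\<bar> * norm x"
    by (simp add: norm_quat_def quat_sqnorm_def power_mult_distrib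
        flip: distrib_left real_sqrt_abs real_sqrt_mult)
  show "norm (x * y) = norm x * norm y"
    by (simp add: norm_quat_def quat_sqnorm_mult real_sqrt_mult)
  show "(r *\<^sub>R x) * y = r *\<^sub>R (x * y)" by (simp add: quat_eq_iff algebra_simps)
  show "x * (r *\<^sub>R y) = r *\<^sub>R (x * y)" by (simp add: quat_eq_iff algebra_simps)
qed (simp_all add: sgn_quat_def dist_quat_def open_quat_def uniformity_quat_def)
end

definition quat_of_complex :: "complex \<Rightarrow> quat" where
  "quat_of_complex z = Quat (Re z) (Im z) 0 0"

text \<open>The surface is parametrised by an open subset \<open>U\<close> of \<open>\<complex>\<close> with its standard complex
  structure \<open>J X = \<i> X\<close>.  \<open>d f p\<close> is the differential of \<open>f\<close> at \<open>p\<close>, and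
  \<open>hodge_d f p X = d f p (J X)\<close> is \<open>*df\<close>.\<close>

definition d :: "(complex \<Rightarrow> quat) \<Rightarrow> complex \<Rightarrow> complex \<Rightarrow> quat" where
  "d f p = frechet_derivative f (at p)"

definition hodge_d :: "(complex \<Rightarrow> quat) \<Rightarrow> complex \<Rightarrow> complex \<Rightarrow> quat" where
  "hodge_d f p X = d f p (\<i> * X)"

definition conformal_immersion :: "complex set \<Rightarrow> (complex \<Rightarrow> quat) \<Rightarrow> bool" where
  "conformal_immersion U f \<longleftrightarrow> f differentiable_on U \<and>
     (\<forall>p\<in>U. inj (d f p) \<and>
        (\<exists>N R. N * N = -1 \<and> R * R = -1 \<and>
           (\<forall>X. hodge_d f p X = N * d f p X) \<and> (\<forall>X. hodge_d f p X = - (d f p X * R))))"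

text \<open>Harmonicity \<open>f\<^sub>x\<^sub>x + f\<^sub>y\<^sub>y = 0\<close>; a conformal immersion is minimal iff it is harmonic.\<close>

definition harmonic_on :: "complex set \<Rightarrow> (complex \<Rightarrow> quat) \<Rightarrow> bool" where
  "harmonic_on U f \<longleftrightarrow> f differentiable_on U \<and>
     (\<forall>X. (\<lambda>z. d f z X) differentiable_on U) \<and>
     (\<forall>p\<in>U. d (\<lambda>z. d f z 1) p 1 + d (\<lambda>z. d f z \<i>) p \<i> = 0)"

definition minimal_conformal_immersion :: "complex set \<Rightarrow> (complex \<Rightarrow> quat) \<Rightarrow> bool" where
  "minimal_conformal_immersion U f \<longleftrightarrow> conformal_immersion U f \<and> harmonic_on U f"

definition is_right_normal :: "complex set \<Rightarrow> (complex \<Rightarrow> quat) \<Rightarrow> (complex \<Rightarrow> quat) \<Rightarrow> bool" where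
  "is_right_normal U f R \<longleftrightarrow> (\<forall>p\<in>U. \<forall>X. hodge_d f p X = - (d f p X * R p))"

definition is_conjugate :: "complex set \<Rightarrow> (complex \<Rightarrow> quat) \<Rightarrow> (complex \<Rightarrow> quat) \<Rightarrow> bool" where
  "is_conjugate U f fs \<longleftrightarrow> fs differentiable_on U \<and>
     (\<forall>p\<in>U. \<forall>X. d fs p X = - hodge_d f p X)"

definition in_right_assoc_family ::
  "complex set \<Rightarrow> (complex \<Rightarrow> quat) \<Rightarrow> (complex \<Rightarrow> quat) \<Rightarrow> (complex \<Rightarrow> quat) \<Rightarrow> bool" where
  "in_right_assoc_family U f fs g \<longleftrightarrow> (\<exists>p q. \<forall>z\<in>U. g z = f z * p + fs z * q)"

definition assoc_willmore :: "(complex \<Rightarrow> quat) \<Rightarrow> (complex \<Rightarrow> quat) \<Rightarrow> (complex \<Rightarrow> quat) \<Rightarrow> complex \<Rightarrow> quat" where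
  "assoc_willmore g Rg gs z = g z * Rg z - gs z"

end

theory Submission
  imports Defs
begin

(* With k = a - 1 one has b = \<rho> k, hence dh = df (b + R k) = df (\<rho> + R) k.  So h is the member
   f b + f* k of the right associated family, its conjugate is f* b - f k, and its right normal is
   inverse W * R * W for W = (\<rho> + R) k; as (\<rho> + R) k (\<rho> + R) commutes with R, this is the
   stated R_h.  Every member of the family is minimal because f and f* are harmonic, and for f*,
   whose differential is -df(J _), harmonicity is the symmetry of the mixed second derivatives of f.
   Conjugation by m turns a, b, \<rho> into complex numbers, for which b = \<rho> k and k (1 + \<rho>^2) = -2;
   given these, the formula for the Darboux transform is a pointwise quaternion identity. *)

section \<open>Symmetry of mixed second derivatives\<close>

lemma norm_diff_le_of_vector_derivative_bound:
  fixes \<phi> :: "real \<Rightarrow> 'b::real_normed_vector"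
  assumes "0 \<le> t"
    and "\<And>s. s \<in> {0..t} \<Longrightarrow> (\<phi> has_vector_derivative \<phi>' s) (at s)"
    and "\<And>s. s \<in> {0..t} \<Longrightarrow> norm (\<phi>' s) \<le> B"
  shows "norm (\<phi> t - \<phi> 0) \<le> B * t"
proof -
  have "norm (\<phi> t - \<phi> 0) \<le> B * norm (t - 0)"
  proof (rule differentiable_bound[where f' = "\<lambda>s h. h *\<^sub>R \<phi>' s"])
    show "(\<phi> has_derivative (\<lambda>h. h *\<^sub>R \<phi>' s)) (at s within {0..t})" if "s \<in> {0..t}" for s
      using assms(2)[OF that] has_derivative_at_withinI by (auto simp: has_vector_derivative_def)
    show "onorm (\<lambda>h. h *\<^sub>R \<phi>' s) \<le> B" if "s \<in> {0..t}" for s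
      using assms(3)[OF that] by (simp add: onorm_scaleR_left onorm_id)
  qed (use assms(1) in auto)
  with assms(1) show ?thesis by simp
qed

lemma has_vector_derivative_along_line:
  fixes f :: "'a::real_normed_vector \<Rightarrow> 'b::real_normed_vector"
  assumes "(f has_derivative D) (at (a + s *\<^sub>R w))"
  shows "((\<lambda>s. f (a + s *\<^sub>R w)) has_vector_derivative D w) (at s)"
proof -
  have "((\<lambda>s. a + s *\<^sub>R w) has_derivative (\<lambda>h. h *\<^sub>R w)) (at s)"
    by (auto intro!: derivative_eq_intros)
  from diff_chain_at[OF this assms] show ?thesis
    using linear_scale[OF has_derivative_linear[OF assms]]
    by (simp add: has_vector_derivative_def o_def)
qed

lemma second_difference_bound:
  fixes f :: "'a::real_normed_vector \<Rightarrow> 'b::real_normed_vector"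
  assumes t: "0 \<le> t" and A: "linear A"
    and f: "\<And>y. norm (y - p) \<le> t * (norm u + norm v) \<Longrightarrow> (f has_derivative D y) (at y)"
    and D: "\<And>y. norm (y - p) \<le> t * (norm u + norm v) \<Longrightarrow> norm (D y u - D p u - A (y - p)) \<le> c"
  shows "norm (f (p + t *\<^sub>R u + t *\<^sub>R v) - f (p + t *\<^sub>R u) - f (p + t *\<^sub>R v) + f p
      - (t * t) *\<^sub>R A v) \<le> 2 * c * t"
proof -
  define \<phi> where "\<phi> s = f (p + t *\<^sub>R v + s *\<^sub>R u) - f (p + s *\<^sub>R u) - (s * t) *\<^sub>R A v" for s
  have "norm (\<phi> t - \<phi> 0) \<le> 2 * c * t"
  proof (rule norm_diff_le_of_vector_derivative_bound[OF t])
    fix s assume s: "s \<in> {0..t}"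
    let ?y1 = "p + t *\<^sub>R v + s *\<^sub>R u" and ?y2 = "p + s *\<^sub>R u"
    have "s * norm u \<le> t * norm u" "0 \<le> t * norm v"
      using s t by (auto intro: mult_right_mono)
    moreover have "norm (?y1 - p) \<le> s * norm u + t * norm v" "norm (?y2 - p) = s * norm u"
      using s t norm_triangle_ineq[of "t *\<^sub>R v" "s *\<^sub>R u"] by (auto simp: add.commute)
    ultimately have y: "norm (?y1 - p) \<le> t * (norm u + norm v)"
        "norm (?y2 - p) \<le> t * (norm u + norm v)"
      unfolding distrib_left by linarith+
    have "((\<lambda>s. f (p + t *\<^sub>R v + s *\<^sub>R u)) has_vector_derivative D ?y1 u) (at s)"
      using f[OF y(1)] by (rule has_vector_derivative_along_line)
    moreover have "((\<lambda>s. f (p + s *\<^sub>R u)) has_vector_derivative D ?y2 u) (at s)"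
      using f[OF y(2)] by (rule has_vector_derivative_along_line)
    moreover have "((\<lambda>s. (s * t) *\<^sub>R A v) has_vector_derivative t *\<^sub>R A v) (at s)"
      by (auto intro!: derivative_eq_intros simp: has_vector_derivative_def fun_eq_iff)
    ultimately show "(\<phi> has_vector_derivative (D ?y1 u - D ?y2 u - t *\<^sub>R A v)) (at s)"
      unfolding \<phi>_def[abs_def] by (intro has_vector_derivative_diff)
    have "A (?y1 - p) - A (?y2 - p) = t *\<^sub>R A v"
      by (simp add: linear_add[OF A] linear_scale[OF A])
    then have "D ?y1 u - D ?y2 u - t *\<^sub>R A v
        = (D ?y1 u - D p u - A (?y1 - p)) - (D ?y2 u - D p u - A (?y2 - p))"
      by (simp add: algebra_simps)
    then show "norm (D ?y1 u - D ?y2 u - t *\<^sub>R A v) \<le> 2 * c"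
      using D[OF y(1)] D[OF y(2)] norm_triangle_ineq4 by (smt (verit))
  qed
  then show ?thesis by (simp add: \<phi>_def algebra_simps)
qed

lemma second_difference_estimate:
  fixes f :: "'a::real_normed_vector \<Rightarrow> 'b::real_normed_vector"
  assumes "open U" and "p \<in> U"
    and f: "\<And>z. z \<in> U \<Longrightarrow> (f has_derivative D z) (at z)"
    and Du: "((\<lambda>z. D z u) has_derivative A) (at p)"
    and "e > 0"
  obtains \<delta> where "\<delta> > 0"
    and "\<And>t. 0 < t \<Longrightarrow> t < \<delta> \<Longrightarrow>
      norm (f (p + t *\<^sub>R u + t *\<^sub>R v) - f (p + t *\<^sub>R u) - f (p + t *\<^sub>R v) + f p - (t * t) *\<^sub>R A v)
        \<le> e * t * t"
proof -
  define K where "K = norm u + norm v"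
  have K: "K \<ge> 0" by (simp add: K_def)
  obtain r where r: "r > 0" "ball p r \<subseteq> U" using assms(1,2) open_contains_ball by blast
  have "e / (2 * K + 1) > 0" using \<open>e > 0\<close> K by simp
  then obtain \<epsilon> where \<epsilon>: "\<epsilon> > 0" and
    lin: "\<And>y. norm (y - p) < \<epsilon> \<Longrightarrow> norm (D y u - D p u - A (y - p)) \<le> e / (2 * K + 1) * norm (y - p)"
    using Du unfolding has_derivative_at_alt by blast
  show thesis
  proof (rule that)
    show "min r \<epsilon> / (K + 1) > 0" using r \<epsilon> K by simp
    fix t :: real assume t: "0 < t" "t < min r \<epsilon> / (K + 1)"
    have tK: "t * K < min r \<epsilon>"
      using t K by (simp add: pos_less_divide_eq) (smt (verit) mult_left_mono)
    have "norm (f (p + t *\<^sub>R u + t *\<^sub>R v) - f (p + t *\<^sub>R u) - f (p + t *\<^sub>R v) + f p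
        - (t * t) *\<^sub>R A v) \<le> 2 * (e / (2 * K + 1) * (t * K)) * t"
    proof (rule second_difference_bound)
      fix y assume y: "norm (y - p) \<le> t * (norm u + norm v)"
      with tK have "norm (y - p) < r" "norm (y - p) < \<epsilon>" by (auto simp: K_def)
      then have "y \<in> U" "norm (D y u - D p u - A (y - p)) \<le> e / (2 * K + 1) * norm (y - p)"
        using r(2) lin by (auto simp: dist_norm norm_minus_commute[of p])
      moreover have "e / (2 * K + 1) * norm (y - p) \<le> e / (2 * K + 1) * (t * K)"
        using y \<open>e > 0\<close> K by (intro mult_left_mono) (auto simp: K_def)
      ultimately show "(f has_derivative D y) (at y)"
        and "norm (D y u - D p u - A (y - p)) \<le> e / (2 * K + 1) * (t * K)"
        using f by auto
    qed (use t Du has_derivative_linear in auto)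
    also have "\<dots> \<le> e * t * t"
      using t K \<open>e > 0\<close> by (simp add: field_simps mult_left_mono)
    finally show "norm (f (p + t *\<^sub>R u + t *\<^sub>R v) - f (p + t *\<^sub>R u) - f (p + t *\<^sub>R v) + f p
        - (t * t) *\<^sub>R A v) \<le> e * t * t" .
  qed
qed

lemma second_derivatives_symmetric:
  fixes f :: "'a::real_normed_vector \<Rightarrow> 'b::real_normed_vector"
  assumes "open U" and "p \<in> U"
    and f: "\<And>z. z \<in> U \<Longrightarrow> (f has_derivative D z) (at z)"
    and Du: "((\<lambda>z. D z u) has_derivative A) (at p)"
    and Dv: "((\<lambda>z. D z v) has_derivative B) (at p)"
  shows "A v = B u"
proof (rule ccontr)
  assume "A v \<noteq> B u"
  then have e: "norm (A v - B u) / 4 > 0" by simp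
  obtain \<delta>1 where \<delta>1: "\<delta>1 > 0" "\<And>t. 0 < t \<Longrightarrow> t < \<delta>1 \<Longrightarrow>
      norm (f (p + t *\<^sub>R u + t *\<^sub>R v) - f (p + t *\<^sub>R u) - f (p + t *\<^sub>R v) + f p - (t * t) *\<^sub>R A v)
        \<le> norm (A v - B u) / 4 * t * t"
    using second_difference_estimate[OF assms(1,2) f Du e] by blast
  obtain \<delta>2 where \<delta>2: "\<delta>2 > 0" "\<And>t. 0 < t \<Longrightarrow> t < \<delta>2 \<Longrightarrow>
      norm (f (p + t *\<^sub>R v + t *\<^sub>R u) - f (p + t *\<^sub>R v) - f (p + t *\<^sub>R u) + f p - (t * t) *\<^sub>R B u)
        \<le> norm (A v - B u) / 4 * t * t"
    using second_difference_estimate[OF assms(1,2) f Dv e] by blast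
  define t where "t = min \<delta>1 \<delta>2 / 2"
  have t: "0 < t" "t < \<delta>1" "t < \<delta>2" using \<delta>1(1) \<delta>2(1) by (auto simp: t_def)
  define \<Delta> where "\<Delta> = f (p + t *\<^sub>R u + t *\<^sub>R v) - f (p + t *\<^sub>R u) - f (p + t *\<^sub>R v) + f p"
  have "p + t *\<^sub>R v + t *\<^sub>R u = p + t *\<^sub>R u + t *\<^sub>R v" by (simp add: algebra_simps)
  then have "norm (\<Delta> - (t * t) *\<^sub>R B u) \<le> norm (A v - B u) / 4 * t * t"
    using \<delta>2(2)[OF t(1,3)] by (simp add: \<Delta>_def algebra_simps)
  moreover have "norm (\<Delta> - (t * t) *\<^sub>R A v) \<le> norm (A v - B u) / 4 * t * t"
    using \<delta>1(2)[OF t(1,2)] by (simp add: \<Delta>_def)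
  moreover have "(t * t) *\<^sub>R (A v - B u) = (\<Delta> - (t * t) *\<^sub>R B u) - (\<Delta> - (t * t) *\<^sub>R A v)"
    by (simp add: algebra_simps)
  ultimately have "norm ((t * t) *\<^sub>R (A v - B u)) \<le> norm (A v - B u) / 2 * (t * t)"
    using norm_triangle_ineq4[of "\<Delta> - (t * t) *\<^sub>R B u" "\<Delta> - (t * t) *\<^sub>R A v"] by simp
  then have "(t * t) * norm (A v - B u) \<le> (t * t) * (norm (A v - B u) / 2)"
    by (simp add: mult.commute)
  with t(1) e show False by simp
qed

section \<open>Surfaces and their right multiples\<close>

lemma d_eqI: "(F has_derivative D) (at p) \<Longrightarrow> d F p = D"
  unfolding d_def by (rule frechet_derivative_at[symmetric])

lemma has_derivative_d:
  "open U \<Longrightarrow> F differentiable_on U \<Longrightarrow> p \<in> U \<Longrightarrow> (F has_derivative d F p) (at p)"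
  unfolding d_def by (metis differentiable_on_eq_differentiable_at frechet_derivative_works)

lemma d_cong_open:
  assumes "open U" "p \<in> U" "\<And>z. z \<in> U \<Longrightarrow> F z = G z"
  shows "d F p = d G p"
proof -
  have "(F has_derivative D) (at p) \<longleftrightarrow> (G has_derivative D) (at p)" for D
    using has_derivative_transform_within_open[OF _ assms(1,2)] assms(3) by metis
  then show ?thesis unfolding d_def frechet_derivative_def by simp
qed

lemma differentiable_on_transform_open:
  assumes "open U" "G differentiable_on U" "\<And>z. z \<in> U \<Longrightarrow> F z = G z"
  shows "F differentiable_on U"
  using assms differentiable_transform_within[of G _ U _ F]
  unfolding differentiable_on_eq_differentiable_at[OF assms(1)]
  by (metis at_within_open open_contains_ball_eq zero_less_one)

lemma d_lincomb:
  fixes g1 g2 :: "complex \<Rightarrow> quat"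
  assumes "open U" "g1 differentiable_on U" "g2 differentiable_on U" "p \<in> U"
  shows "d (\<lambda>z. g1 z * P + g2 z * Q) p X = d g1 p X * P + d g2 p X * Q"
proof -
  have "((\<lambda>z. g1 z * P + g2 z * Q) has_derivative (\<lambda>X. d g1 p X * P + d g2 p X * Q)) (at p)"
    using has_derivative_d[OF assms(1,2,4)] has_derivative_d[OF assms(1,3,4)]
    by (auto intro!: derivative_intros)
  then show ?thesis by (simp add: d_eqI)
qed

lemma harmonic_on_lincomb:
  assumes "open U" "harmonic_on U g1" "harmonic_on U g2"
  shows "harmonic_on U (\<lambda>z. g1 z * P + g2 z * Q)"
proof -
  let ?F = "\<lambda>z. g1 z * P + g2 z * Q"
  have g: "g1 differentiable_on U" "g2 differentiable_on U"
    "(\<lambda>z. d g1 z X) differentiable_on U" "(\<lambda>z. d g2 z X) differentiable_on U" for X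
    using assms(2,3) by (auto simp: harmonic_on_def)
  have dd: "d (\<lambda>z. d ?F z X) p Y
      = d (\<lambda>z. d g1 z X) p Y * P + d (\<lambda>z. d g2 z X) p Y * Q" if "p \<in> U" for p X Y
  proof -
    have "d (\<lambda>z. d ?F z X) p = d (\<lambda>z. d g1 z X * P + d g2 z X * Q) p"
      by (rule d_cong_open[OF assms(1) that]) (rule d_lincomb[OF assms(1) g(1,2)])
    then show ?thesis using that by (simp add: d_lincomb[OF assms(1) g(3,4)])
  qed
  show ?thesis
    unfolding harmonic_on_def
  proof (intro conjI allI ballI)
    show "?F differentiable_on U"
      using g by (auto intro!: derivative_intros)
    have "(\<lambda>z. d g1 z X * P + d g2 z X * Q) differentiable_on U" for X
      using g(3,4) by (intro derivative_intros)
    then show "(\<lambda>z. d ?F z X) differentiable_on U" for X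
      by (rule differentiable_on_transform_open[OF assms(1)]) (rule d_lincomb[OF assms(1) g(1,2)])
    fix p assume p: "p \<in> U"
    have "d (\<lambda>z. d ?F z 1) p 1 + d (\<lambda>z. d ?F z \<i>) p \<i> =
        (d (\<lambda>z. d g1 z 1) p 1 + d (\<lambda>z. d g1 z \<i>) p \<i>) * P
      + (d (\<lambda>z. d g2 z 1) p 1 + d (\<lambda>z. d g2 z \<i>) p \<i>) * Q"
      unfolding dd[OF p] by (simp add: algebra_simps)
    with assms(2,3) p
    show "d (\<lambda>z. d ?F z 1) p 1 + d (\<lambda>z. d ?F z \<i>) p \<i> = 0"
      by (simp add: harmonic_on_def)
  qed
qed

lemma conformal_immersion_right_mult:
  assumes "conformal_immersion U g" "F differentiable_on U"
    and dF: "\<And>z X. z \<in> U \<Longrightarrow> d F z X = d g z X * W z"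
    and W: "\<And>z. z \<in> U \<Longrightarrow> W z \<noteq> 0"
  shows "conformal_immersion U F"
  unfolding conformal_immersion_def
proof (intro conjI ballI \<open>F differentiable_on U\<close>)
  fix z assume z: "z \<in> U"
  obtain N R where NR: "inj (d g z)" "N * N = -1" "R * R = -1"
    "\<And>X. hodge_d g z X = N * d g z X" "\<And>X. hodge_d g z X = - (d g z X * R)"
    using assms(1) z unfolding conformal_immersion_def by blast
  have hodge: "hodge_d F z X = hodge_d g z X * W z" for X
    by (simp add: hodge_d_def dF[OF z])
  show "inj (d F z)"
    using NR(1) W[OF z] by (simp add: inj_def dF[OF z])
  have "inverse (W z) * R * W z * (inverse (W z) * R * W z)
      = inverse (W z) * (R * (W z * inverse (W z)) * R) * W z"
    by (simp add: mult.assoc)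
  also have "\<dots> = -1" using W[OF z] NR(3) by (simp add: mult.assoc)
  finally have "inverse (W z) * R * W z * (inverse (W z) * R * W z) = -1" .
  moreover have "hodge_d F z X = N * d F z X" for X
    by (simp add: hodge NR(4) dF[OF z] mult.assoc)
  moreover have "hodge_d F z X = - (d F z X * (inverse (W z) * R * W z))" for X
  proof -
    have "d F z X * (inverse (W z) * R * W z) = d g z X * (W z * inverse (W z)) * R * W z"
      by (simp add: dF[OF z] mult.assoc)
    then show ?thesis using W[OF z] by (simp add: hodge NR(5))
  qed
  ultimately show "\<exists>N R. N * N = -1 \<and> R * R = -1 \<and> (\<forall>X. hodge_d F z X = N * d F z X)
      \<and> (\<forall>X. hodge_d F z X = - (d F z X * R))"
    using NR(2) by blast
qed

lemma is_right_normal_right_mult: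
  assumes "is_right_normal U g R"
    and dF: "\<And>z X. z \<in> U \<Longrightarrow> d F z X = d g z X * W z"
    and "\<And>z. z \<in> U \<Longrightarrow> W z * RF z = R z * W z"
  shows "is_right_normal U F RF"
  unfolding is_right_normal_def
proof (intro ballI allI)
  fix z X assume z: "z \<in> U"
  have "hodge_d F z X = - (d g z X * (R z * W z))"
    using assms(1) z by (simp add: is_right_normal_def hodge_d_def dF mult.assoc)
  also have "\<dots> = - (d F z X * RF z)"
    by (simp add: assms(3)[OF z, symmetric] dF[OF z] mult.assoc)
  finally show "hodge_d F z X = - (d F z X * RF z)" .
qed

section \<open>The right associated family\<close>

locale minimal_surface =
  fixes U :: "complex set" and f fs R :: "complex \<Rightarrow> quat"
  assumes open_domain: "open U"
    and minimal: "minimal_conformal_immersion U f"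
    and right_normal: "is_right_normal U f R"
    and conjugate: "is_conjugate U f fs"
begin

lemma differentiable_f: "f differentiable_on U"
  and harmonic_f: "harmonic_on U f"
  and conformal_f: "conformal_immersion U f"
  using minimal by (simp_all add: minimal_conformal_immersion_def conformal_immersion_def)

lemma differentiable_fs: "fs differentiable_on U"
  using conjugate by (simp add: is_conjugate_def)

lemma d_fs: "z \<in> U \<Longrightarrow> d fs z X = d f z X * R z"
  using conjugate right_normal by (simp add: is_conjugate_def is_right_normal_def)

lemma d_fs_rotate: "z \<in> U \<Longrightarrow> d fs z X = - d f z (\<i> * X)"
  using conjugate by (simp add: is_conjugate_def hodge_d_def)

lemma right_normal_square: "z \<in> U \<Longrightarrow> R z * R z = -1"
proof -
  assume z: "z \<in> U"
  obtain R0 where R0: "R0 * R0 = -1" "hodge_d f z 1 = - (d f z 1 * R0)"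
    using conformal_f z unfolding conformal_immersion_def by blast
  have "inj (d f z)" "linear (d f z)"
    using conformal_f z has_derivative_d[OF open_domain differentiable_f z] has_derivative_linear
    unfolding conformal_immersion_def by blast+
  then have "d f z 1 \<noteq> 0" by (metis injD linear_0 one_neq_zero)
  moreover have "d f z 1 * R0 = d f z 1 * R z"
    using R0(2) right_normal z unfolding is_right_normal_def by (metis neg_equal_iff_equal)
  ultimately have "R0 = R z" by simp
  with R0(1) show ?thesis by simp
qed

lemma harmonic_fs: "harmonic_on U fs"
  unfolding harmonic_on_def
proof (intro conjI allI ballI differentiable_fs)
  have df: "(\<lambda>z. d f z X) differentiable_on U" for X
    using harmonic_f by (simp add: harmonic_on_def)
  show dfs: "(\<lambda>z. d fs z X) differentiable_on U" for X
    by (rule differentiable_on_transform_open[OF open_domain, of "\<lambda>z. - d f z (\<i> * X)"])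
      (simp_all add: df differentiable_on_minus d_fs_rotate)
  fix p assume p: "p \<in> U"
  have "d (\<lambda>z. d fs z 1) p = d (\<lambda>z. - d f z \<i>) p"
    by (rule d_cong_open[OF open_domain p]) (simp add: d_fs_rotate)
  also have "\<dots> = (\<lambda>Y. - d (\<lambda>z. d f z \<i>) p Y)"
    by (intro d_eqI has_derivative_minus has_derivative_d[OF open_domain df p])
  finally have 1: "d (\<lambda>z. d fs z 1) p 1 = - d (\<lambda>z. d f z \<i>) p 1" by simp
  have "d (\<lambda>z. d fs z \<i>) p = d (\<lambda>z. d f z 1) p"
  proof (rule d_cong_open[OF open_domain p])
    fix z assume z: "z \<in> U"
    have "linear (d f z)"
      using has_derivative_d[OF open_domain differentiable_f z] has_derivative_linear by blast
    then show "d fs z \<i> = d f z 1" using z by (simp add: d_fs_rotate linear_neg[of "d f z"])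
  qed
  then have 2: "d (\<lambda>z. d fs z \<i>) p \<i> = d (\<lambda>z. d f z 1) p \<i>" by simp
  have "d (\<lambda>z. d f z 1) p \<i> = d (\<lambda>z. d f z \<i>) p 1"
    by (rule second_derivatives_symmetric[OF open_domain p
          has_derivative_d[OF open_domain differentiable_f]
          has_derivative_d[OF open_domain df p] has_derivative_d[OF open_domain df p]])
  then show "d (\<lambda>z. d fs z 1) p 1 + d (\<lambda>z. d fs z \<i>) p \<i> = 0" by (simp add: 1 2)
qed

lemma d_assoc_family: "z \<in> U \<Longrightarrow> d (\<lambda>z. f z * P + fs z * Q) z X = d f z X * (P + R z * Q)"
  by (simp add: d_lincomb[OF open_domain differentiable_f differentiable_fs] d_fs algebra_simps)

lemma is_conjugate_assoc_family: "is_conjugate U (\<lambda>z. f z * P + fs z * Q) (\<lambda>z. fs z * P - f z * Q)"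
  unfolding is_conjugate_def
proof (intro conjI ballI allI)
  show "(\<lambda>z. fs z * P - f z * Q) differentiable_on U"
    using differentiable_f differentiable_fs by (intro derivative_intros)
  fix z X assume z: "z \<in> U"
  have "(\<lambda>z. fs z * P - f z * Q) = (\<lambda>z. fs z * P + f z * (- Q))"
    by (simp add: fun_eq_iff)
  then have "d (\<lambda>z. fs z * P - f z * Q) z X = d (\<lambda>z. fs z * P + f z * (- Q)) z X"
    by (rule arg_cong)
  also have "\<dots> = d f z X * (R z * P - Q)"
    unfolding d_lincomb[OF open_domain differentiable_fs differentiable_f z]
    by (simp add: d_fs[OF z] algebra_simps)
  also have "\<dots> = d f z X * (R z * (P + R z * Q))"
    by (simp add: distrib_left right_normal_square[OF z] mult.assoc flip: mult.assoc[of "R z"])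
  also have "\<dots> = - hodge_d (\<lambda>z. f z * P + fs z * Q) z X"
    using right_normal z by (simp add: hodge_d_def d_assoc_family is_right_normal_def mult.assoc)
  finally show "d (\<lambda>z. fs z * P - f z * Q) z X = - hodge_d (\<lambda>z. f z * P + fs z * Q) z X" .
qed

lemma associated_family_member:
  assumes "\<And>z. z \<in> U \<Longrightarrow> P + R z * Q \<noteq> 0"
    and "\<And>z. z \<in> U \<Longrightarrow> (P + R z * Q) * RF z = R z * (P + R z * Q)"
  shows "minimal_conformal_immersion U (\<lambda>z. f z * P + fs z * Q)"
    and "in_right_assoc_family U f fs (\<lambda>z. f z * P + fs z * Q)"
    and "is_conjugate U (\<lambda>z. f z * P + fs z * Q) (\<lambda>z. fs z * P - f z * Q)"
    and "is_right_normal U (\<lambda>z. f z * P + fs z * Q) RF"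
proof -
  have "(\<lambda>z. f z * P + fs z * Q) differentiable_on U"
    using differentiable_f differentiable_fs by (intro derivative_intros)
  then have "conformal_immersion U (\<lambda>z. f z * P + fs z * Q)"
    by (rule conformal_immersion_right_mult[OF conformal_f _ d_assoc_family assms(1)])
  moreover have "harmonic_on U (\<lambda>z. f z * P + fs z * Q)"
    using open_domain harmonic_f harmonic_fs by (rule harmonic_on_lincomb)
  ultimately show "minimal_conformal_immersion U (\<lambda>z. f z * P + fs z * Q)"
    by (simp add: minimal_conformal_immersion_def)
  show "in_right_assoc_family U f fs (\<lambda>z. f z * P + fs z * Q)"
    unfolding in_right_assoc_family_def by blast
  show "is_conjugate U (\<lambda>z. f z * P + fs z * Q) (\<lambda>z. fs z * P - f z * Q)"
    by (rule is_conjugate_assoc_family)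
  show "is_right_normal U (\<lambda>z. f z * P + fs z * Q) RF"
    using right_normal d_assoc_family assms(2) by (rule is_right_normal_right_mult)
qed

end

section \<open>Quaternion algebra of the Darboux parameters\<close>

lemma quat_of_complex_add: "quat_of_complex (z + w) = quat_of_complex z + quat_of_complex w"
  and quat_of_complex_diff: "quat_of_complex (z - w) = quat_of_complex z - quat_of_complex w"
  and quat_of_complex_mult: "quat_of_complex (z * w) = quat_of_complex z * quat_of_complex w"
  and quat_of_complex_of_real: "quat_of_complex (of_real r) = of_real r"
  by (simp_all add: quat_eq_iff quat_of_complex_def of_real_def)

lemma quat_of_complex_one: "quat_of_complex 1 = 1"
  using quat_of_complex_of_real[of 1] by simp

definition conj_by :: "quat \<Rightarrow> quat \<Rightarrow> quat" where
  "conj_by m x = m * x * inverse m"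

lemma conj_by_add: "conj_by m (x + y) = conj_by m x + conj_by m y"
  and conj_by_diff: "conj_by m (x - y) = conj_by m x - conj_by m y"
  by (simp_all add: conj_by_def algebra_simps)

lemma conj_by_mult: "m \<noteq> 0 \<Longrightarrow> conj_by m (x * y) = conj_by m x * conj_by m y"
  by (simp add: conj_by_def mult.assoc flip: mult.assoc[of "inverse m" m])

lemma conj_by_of_real: "m \<noteq> 0 \<Longrightarrow> conj_by m (of_real r) = of_real r"
  by (simp add: conj_by_def of_real_def)

lemma conj_by_one: "m \<noteq> 0 \<Longrightarrow> conj_by m 1 = 1"
  using conj_by_of_real[of m 1] by simp

lemma conj_by_conj_by_inverse: "m \<noteq> 0 \<Longrightarrow> conj_by m (conj_by (inverse m) x) = x"
  by (simp add: conj_by_def mult.assoc flip: mult.assoc[of m "inverse m"])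

lemma darboux_parameter_identities:
  fixes \<mu> :: complex
  assumes "\<mu> \<noteq> 0" "\<mu> \<noteq> 1"
  defines "K \<equiv> (\<mu> + inverse \<mu>) / 2 - 1" and "P \<equiv> \<i> * (1 + \<mu>) / (1 - \<mu>)"
  shows "\<i> * (inverse \<mu> - \<mu>) / 2 = P * K" and "K * (1 + P * P) = -2"
proof -
  have \<mu>1: "1 - \<mu> \<noteq> 0" using assms(2) by simp
  show "\<i> * (inverse \<mu> - \<mu>) / 2 = P * K"
    using assms(1) \<mu>1 by (simp add: K_def P_def field_simps)
  have "1 + \<mu> * \<mu> - \<mu> * 2 = (1 - \<mu>) * (1 - \<mu>)" by (simp add: algebra_simps)
  with \<mu>1 have \<mu>2: "1 + \<mu> * \<mu> - \<mu> * 2 \<noteq> 0" by simp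
  have K: "K = (1 - \<mu>) * (1 - \<mu>) / (2 * \<mu>)"
    using assms(1) by (simp add: K_def field_simps; simp add: algebra_simps)
  have P: "1 + P * P = - 4 * \<mu> / ((1 - \<mu>) * (1 - \<mu>))"
    using \<mu>1 \<mu>2 by (simp add: P_def field_simps; simp add: algebra_simps)
  have cancel: "q / (2 * \<mu>) * (- 4 * \<mu> / q) = -2" if "q \<noteq> 0" for q
    using assms(1) that by (simp add: field_simps)
  show "K * (1 + P * P) = -2"
    unfolding K P by (rule cancel) (use \<mu>1 in simp)
qed

lemma quat_square_minus_oneE:
  assumes "R * R = (-1::quat)"
  obtains x y z where "R = Quat 0 x y z" and "x\<^sup>2 + y\<^sup>2 + z\<^sup>2 = 1"
proof -
  have e: "qRe R * qRe R - qI R * qI R - qJ R * qJ R - qK R * qK R = -1"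
    "qRe R * qI R = 0" "qRe R * qJ R = 0" "qRe R * qK R = 0"
    using assms by (auto simp: quat_eq_iff)
  have "qRe R = 0"
  proof (rule ccontr)
    assume "qRe R \<noteq> 0"
    with e have "qRe R * qRe R = -1" by simp
    then show False by (smt (verit) zero_le_square)
  qed
  with e(1) show thesis
    by (intro that[of "qI R" "qJ R" "qK R"]) (simp_all add: quat_eq_iff power2_eq_square)
qed

lemma complex_sandwich_commutes:
  fixes R :: quat and c \<kappa> :: complex
  assumes "R * R = -1" and "Im (\<kappa> * (1 + c * c)) = 0"
  defines "S \<equiv> (quat_of_complex c + R) * quat_of_complex \<kappa> * (quat_of_complex c + R)"
  shows "S * R = R * S"
proof -
  obtain x y z where R: "R = Quat 0 x y z" and n: "x\<^sup>2 + y\<^sup>2 + z\<^sup>2 = 1"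
    using assms(1) by (rule quat_square_minus_oneE)
  obtain c1 c2 k1 k2 where c: "c = Complex c1 c2" and k: "\<kappa> = Complex k1 k2"
    by (meson complex.exhaust_sel)
  have "k1 * (2 * c1 * c2) + k2 * (1 + c1 * c1 - c2 * c2) = 0"
    using assms(2) by (simp add: c k algebra_simps)
  with n show ?thesis
    unfolding quat_eq_iff S_def
    by (simp add: R c k quat_of_complex_def power2_eq_square; algebra)
qed

lemma darboux_parameters:
  fixes m R :: quat and \<mu> :: complex
  assumes "\<mu> \<noteq> 0" "\<mu> \<noteq> 1" "m \<noteq> 0" "R * R = -1"
  defines "a \<equiv> m * quat_of_complex ((\<mu> + inverse \<mu>) / 2) * inverse m"
    and "b \<equiv> m * quat_of_complex (\<i> * (inverse \<mu> - \<mu>) / 2) * inverse m"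
    and "\<rho> \<equiv> m * quat_of_complex (\<i> * (1 + \<mu>) / (1 - \<mu>)) * inverse m"
  shows "b = \<rho> * (a - 1)" and "(a - 1) * \<rho> = \<rho> * (a - 1)" and "(a - 1) * (1 + \<rho> * \<rho>) = -2"
    and "(\<rho> + R) * (a - 1) * (\<rho> + R) * R = R * ((\<rho> + R) * (a - 1) * (\<rho> + R))"
proof -
  define K where "K = (\<mu> + inverse \<mu>) / 2 - 1"
  define P where "P = \<i> * (1 + \<mu>) / (1 - \<mu>)"
  note KP = darboux_parameter_identities[OF assms(1,2), folded K_def P_def]
  define \<phi> where "\<phi> z = conj_by m (quat_of_complex z)" for z
  have \<phi>_mult: "\<phi> (z * w) = \<phi> z * \<phi> w" for z w
    by (simp add: \<phi>_def quat_of_complex_mult conj_by_mult[OF assms(3)])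
  have "a = \<phi> ((\<mu> + inverse \<mu>) / 2)" by (simp add: a_def \<phi>_def conj_by_def)
  then have k: "a - 1 = \<phi> K"
    by (simp add: K_def \<phi>_def quat_of_complex_diff quat_of_complex_one conj_by_diff
        conj_by_one[OF assms(3)])
  have \<rho>: "\<rho> = \<phi> P" by (simp add: \<rho>_def P_def \<phi>_def conj_by_def)
  have b: "b = \<phi> (P * K)" by (simp add: b_def \<phi>_def conj_by_def flip: KP(1))
  show "b = \<rho> * (a - 1)" by (simp add: b k \<rho> \<phi>_mult)
  show "(a - 1) * \<rho> = \<rho> * (a - 1)" by (simp add: k \<rho> mult.commute flip: \<phi>_mult)
  have \<phi>_add: "\<phi> (z + w) = \<phi> z + \<phi> w" and \<phi>_of_real: "\<phi> (of_real r) = of_real r" for z w r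
    using assms(3)
    by (simp_all add: \<phi>_def quat_of_complex_add conj_by_add quat_of_complex_of_real conj_by_of_real)
  have "(a - 1) * (1 + \<rho> * \<rho>) = \<phi> (K * (1 + P * P))"
    using \<phi>_of_real[of 1] by (simp add: k \<rho> \<phi>_mult \<phi>_add)
  also have "\<dots> = -2"
    using KP(2) \<phi>_of_real[of "-2"] by simp
  finally show "(a - 1) * (1 + \<rho> * \<rho>) = -2" .
  define R' where "R' = conj_by (inverse m) R"
  have R: "R = conj_by m R'"
    by (simp add: R'_def conj_by_conj_by_inverse[OF assms(3)])
  have "R' * R' = -1"
    using assms(3,4) conj_by_mult[of "inverse m" R R] conj_by_one[of "inverse m"]
    by (simp add: R'_def conj_by_def)
  with KP(2) have "(quat_of_complex P + R') * quat_of_complex K * (quat_of_complex P + R') * R'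
      = R' * ((quat_of_complex P + R') * quat_of_complex K * (quat_of_complex P + R'))"
    by (intro complex_sandwich_commutes) (simp_all add: mult.commute)
  then show "(\<rho> + R) * (a - 1) * (\<rho> + R) * R = R * ((\<rho> + R) * (a - 1) * (\<rho> + R))"
    by (simp add: k \<rho> R \<phi>_def flip: conj_by_add conj_by_mult[OF assms(3)])
qed

lemma add_unit_imaginary_nonzero:
  fixes R \<rho> k :: quat
  assumes "R * R = -1" and "k * (1 + \<rho> * \<rho>) = -2"
  shows "\<rho> + R \<noteq> 0"
proof
  assume "\<rho> + R = 0"
  then have "1 + \<rho> * \<rho> = 0" using assms(1) by (simp add: eq_neg_iff_add_eq_0[symmetric])
  with assms(2) show False by simp
qed

lemma darboux_coefficient:
  fixes R \<rho> k b :: quat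
  assumes "R * R = -1" and "b = \<rho> * k" and "k * (1 + \<rho> * \<rho>) = -2"
    and "(\<rho> + R) * k * (\<rho> + R) * R = R * ((\<rho> + R) * k * (\<rho> + R))"
  shows "b + R * k \<noteq> 0" and "(b + R * k) * ((\<rho> + R) * R * inverse (\<rho> + R)) = R * (b + R * k)"
proof -
  have W: "b + R * k = (\<rho> + R) * k" by (simp add: assms(2) algebra_simps)
  have nz: "\<rho> + R \<noteq> 0" using assms(1,3) by (rule add_unit_imaginary_nonzero)
  moreover have "k \<noteq> 0" using assms(3) by auto
  ultimately show "b + R * k \<noteq> 0" by (simp add: W)
  have "(b + R * k) * ((\<rho> + R) * R * inverse (\<rho> + R)) = (\<rho> + R) * k * (\<rho> + R) * R * inverse (\<rho> + R)"
    by (simp add: W mult.assoc)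
  also have "\<dots> = R * ((\<rho> + R) * k) * ((\<rho> + R) * inverse (\<rho> + R))"
    unfolding assms(4) by (simp add: mult.assoc)
  also have "\<dots> = R * (b + R * k)" using nz by (simp add: W)
  finally show "(b + R * k) * ((\<rho> + R) * R * inverse (\<rho> + R)) = R * (b + R * k)" .
qed

lemma darboux_transform_eq:
  fixes F Fs R \<rho> k b :: quat
  assumes RR: "R * R = -1" and bk: "b = \<rho> * k" and kr: "k * \<rho> = \<rho> * k"
    and kp: "k * (1 + \<rho> * \<rho>) = -2"
  shows "(F * R - Fs) * inverse (R + \<rho>)
       = - (1/2) *\<^sub>R ((F * b + Fs * k) * ((\<rho> + R) * R * inverse (\<rho> + R)) - (Fs * b - F * k))"
proof -
  define P where "P = \<rho> + R"
  have P: "P \<noteq> 0" unfolding P_def using RR kp by (rule add_unit_imaginary_nonzero)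
  have kr2: "\<rho> * (k * \<rho>) = k * (\<rho> * \<rho>)" using kr by (metis mult.assoc)
  have A: "b * P * R + k * P = (-2) *\<^sub>R R"
  proof -
    have "b * P * R + k * P = \<rho> * (k * \<rho>) * R + \<rho> * k * (R * R) + k * \<rho> + k * R"
      by (simp add: bk P_def algebra_simps)
    also have "\<dots> = k * (1 + \<rho> * \<rho>) * R" unfolding kr2 RR using kr by (simp add: algebra_simps)
    finally show ?thesis unfolding kp by (simp add: scaleR_conv_of_real)
  qed
  have B: "k * P * R - b * P = 2 *\<^sub>R 1"
  proof -
    have "k * P * R - b * P = k * \<rho> * R + k * (R * R) - \<rho> * (k * \<rho>) - \<rho> * k * R"
      by (simp add: bk P_def algebra_simps)
    also have "\<dots> = - (k * (1 + \<rho> * \<rho>))" unfolding kr2 RR using kr by (simp add: algebra_simps)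
    finally show ?thesis unfolding kp by (simp add: scaleR_conv_of_real)
  qed
  define X where "X = (F * b + Fs * k) * (P * R * inverse P) - (Fs * b - F * k)"
  have "X * P = (F * b + Fs * k) * P * R * (inverse P * P) - (Fs * b - F * k) * P"
    by (simp add: X_def algebra_simps)
  also have "\<dots> = F * (b * P * R + k * P) + Fs * (k * P * R - b * P)"
    using P by (simp add: algebra_simps)
  also have "\<dots> = (-2) *\<^sub>R (F * R - Fs)" unfolding A B by (simp add: algebra_simps)
  finally have "(- (1/2) *\<^sub>R X) * P = F * R - Fs" by simp
  then have "- (1/2) *\<^sub>R X = (F * R - Fs) * inverse P"
    using P by (metis mult.assoc right_inverse mult_1_right)
  then show ?thesis by (simp add: X_def P_def add.commute)
qed

theorem mainTheorem19:
  fixes U :: "complex set" and f fs R :: "complex \<Rightarrow> quat"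
    and \<mu> :: complex and m :: quat
  assumes "open U" and "connected U" and "simply_connected U"
    and "minimal_conformal_immersion U f"
    and "is_right_normal U f R"
    and "is_conjugate U f fs"
    and "\<mu> \<noteq> 0" and "\<mu> \<noteq> 1" and "m \<noteq> 0"
  defines "a \<equiv> m * quat_of_complex ((\<mu> + inverse \<mu>) / 2) * inverse m"
    and "b \<equiv> m * quat_of_complex (\<i> * (inverse \<mu> - \<mu>) / 2) * inverse m"
    and "\<rho> \<equiv> m * quat_of_complex (\<i> * (1 + \<mu>) / (1 - \<mu>)) * inverse m"
  defines "h \<equiv> \<lambda>z. f z * b + fs z * (a - 1)"
    and "hs \<equiv> \<lambda>z. fs z * b - f z * (a - 1)"
    and "Rh \<equiv> \<lambda>z. (\<rho> + R z) * R z * inverse (\<rho> + R z)"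
  defines "fsharp \<equiv> \<lambda>z. (f z * R z - fs z) * inverse (R z + \<rho>)"
    and "g \<equiv> \<lambda>z. - (1/2) *\<^sub>R h z"
  shows "minimal_conformal_immersion U h \<and> in_right_assoc_family U f fs h
       \<and> is_conjugate U h hs \<and> is_right_normal U h Rh
       \<and> (\<forall>z\<in>U. fsharp z = - (1/2) *\<^sub>R (h z * Rh z - hs z))
       \<and> minimal_conformal_immersion U g \<and> in_right_assoc_family U f fs g
       \<and> is_right_normal U g Rh \<and> is_conjugate U g (\<lambda>z. - (1/2) *\<^sub>R hs z)
       \<and> (\<forall>z\<in>U. fsharp z = assoc_willmore g Rh (\<lambda>z. - (1/2) *\<^sub>R hs z) z)"
proof -
  \<comment> \<open>Connectedness and simple connectivity only serve to provide f*, which is given here.\<close>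
  interpret minimal_surface U f fs R using assms(1,4,5,6) by unfold_locales
  define k where "k = a - 1"
  note params =
    darboux_parameters[OF assms(7,8,9) right_normal_square, folded a_def b_def \<rho>_def k_def]
  have coeff: "b + R z * k \<noteq> 0" "(b + R z * k) * Rh z = R z * (b + R z * k)" if "z \<in> U" for z
    using darboux_coefficient[OF right_normal_square params(1,3,4)] that by (simp_all add: Rh_def)
  have h_eq: "h = (\<lambda>z. f z * b + fs z * k)" "hs = (\<lambda>z. fs z * b - f z * k)"
    by (simp_all add: h_def hs_def k_def)
  have g_eq: "g = (\<lambda>z. f z * (- (1/2) *\<^sub>R b) + fs z * (- (1/2) *\<^sub>R k))"
    "(\<lambda>z. - (1/2) *\<^sub>R hs z) = (\<lambda>z. fs z * (- (1/2) *\<^sub>R b) - f z * (- (1/2) *\<^sub>R k))"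
    by (simp_all add: g_def h_eq fun_eq_iff scaleR_right_distrib scaleR_right_diff_distrib)
  have g_coeff: "- (1/2) *\<^sub>R b + R z * (- (1/2) *\<^sub>R k) = - (1/2) *\<^sub>R (b + R z * k)" for z
    by (simp add: scaleR_right_distrib)
  have g_coeff_props: "- (1/2) *\<^sub>R (b + R z * k) \<noteq> 0"
    "- (1/2) *\<^sub>R (b + R z * k) * Rh z = R z * (- (1/2) *\<^sub>R (b + R z * k))" if "z \<in> U" for z
    using coeff[OF that] by simp_all
  note h_family = associated_family_member[of b k Rh, OF coeff, folded h_eq]
  note g_family = associated_family_member[of "- (1/2) *\<^sub>R b" "- (1/2) *\<^sub>R k" Rh,
      unfolded g_coeff, OF g_coeff_props, folded g_eq]
  have fsharp: "fsharp z = - (1/2) *\<^sub>R (h z * Rh z - hs z)" if "z \<in> U" for z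
    using darboux_transform_eq[OF right_normal_square params(1,2,3)] that
    by (simp add: fsharp_def Rh_def h_eq k_def)
  moreover have
    "- (1/2) *\<^sub>R (h z * Rh z - hs z) = assoc_willmore g Rh (\<lambda>z. - (1/2) *\<^sub>R hs z) z" for z
    by (simp add: assoc_willmore_def g_def scaleR_right_diff_distrib)
  ultimately show ?thesis using h_family g_family by simp
qed

end
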